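(* Assume $abcd\neq0$. For $n\in\{0,1,\dots,M-1\}$, with $\|\vec\varphi(n)\|^2=|\varphi(n;R)|^2+|\varphi(n;L)|^2$, \[\|\vec\varphi(n)\|^2=\begin{cases}\dfrac{|a|^2+|b|^2{\zeta'_{M-n-1}}^2+|b|^2{\zeta'_{M-n}}^2}{|a|^2+|b|^2{\zeta'_M}^2}, & \omega\notin\partial B,\\[3mm] \dfrac{|a|^2+|b|^2(M-n)^2+|b|^2(M-n-1)^2}{|a|^2+M^2|b|^2}, & \omega\in\partial B.\end{cases}\]
   Context: Setting: $M\ge1$, $C=\begin{bmatrix} a&b\\ c&d\end{bmatrix}$ a $2\times2$ unitary matrix, $\Delta=\det C$; $|L\rangle=(1,0)^\top$, $|R\rangle=(0,1)^\top$; $\Gamma_M=\{0,\dots,M-1\}$. $E_M$ is the linear map on $\ell^2(\Gamma_M;\mathbb{C}^2)$ with $(E_M\varphi)(x)=P\varphi(x+1)+Q\varphi(x-1)$, $\varphi(-1)=\varphi(M)=0$, $P=\begin{bmatrix} a&b\\0&0\end{bmatrix}$, $Q=\begin{bmatrix}0&0\\c&d\end{bmatrix}$. For $\xi\in\mathbb{R}$, $z=e^{-i\xi}$, let $\varphi$ be the unique solution of $(z-E_M)\varphi=\delta_0|R\rangle$, $\varphi(x;L)=\langle L|\varphi(x)\rangle$, $\varphi(x;R)=\langle R|\varphi(x)\rangle$. Fix a square root $\Delta^{1/2}$, set $\omega=\Delta^{-1/2}z$ (on the unit circle), $x(\omega)=\frac{\omega+\omega^{-1}}{2|a|}$, $\zeta'_m=U_{m-1}(x(\omega))$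 with $U_m$ the Chebyshev polynomials of the second kind ($U_{-1}=0$, $U_0=1$, $U_{m+1}(t)=2tU_m(t)-U_{m-1}(t)$), and $\partial B=\{\omega:|x(\omega)|=1\}$. *)

theory Defs
  imports "HOL-Analysis.Analysis"
begin

fun chebU :: "nat \<Rightarrow> complex \<Rightarrow> complex" where
  "chebU 0 t = 1"
| "chebU (Suc 0) t = 2 * t"
| "chebU (Suc (Suc m)) t = 2 * t * chebU (Suc m) t - chebU m t"

definition zeta' :: "nat \<Rightarrow> complex \<Rightarrow> complex" where
  "zeta' m t = (if m = 0 then 0 else chebU (m - 1) t)"

text \<open>The coin C = [[a,b],[c,d]] is unitary (C^* C = I written out).\<close>
definition unitary2 :: "complex \<Rightarrow> complex \<Rightarrow> complex \<Rightarrow> complex \<Rightarrow> bool" where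
  "unitary2 a b c d \<longleftrightarrow>
     cmod a ^ 2 + cmod c ^ 2 = 1 \<and> cmod b ^ 2 + cmod d ^ 2 = 1 \<and> cnj a * b + cnj c * d = 0"

text \<open>E_M acting on phi = (phiL, phiR) on Gamma_M = {0..M-1}, extended by zero
  (so phi(-1) = phi(M) = 0):
  (E phi)(x) = P phi(x+1) + Q phi(x-1), P = [[a,b],[0,0]], Q = [[0,0],[c,d]].\<close>
definition extZ :: "nat \<Rightarrow> (int \<Rightarrow> complex) \<Rightarrow> int \<Rightarrow> complex" where
  "extZ M f y = (if 0 \<le> y \<and> y < int M then f y else 0)"

definition EM_L :: "nat \<Rightarrow> complex \<Rightarrow> complex \<Rightarrow> (int \<Rightarrow> complex) \<Rightarrow> (int \<Rightarrow> complex) \<Rightarrow> int \<Rightarrow> complex" where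
  "EM_L M a b phiL phiR x = a * extZ M phiL (x + 1) + b * extZ M phiR (x + 1)"

definition EM_R :: "nat \<Rightarrow> complex \<Rightarrow> complex \<Rightarrow> (int \<Rightarrow> complex) \<Rightarrow> (int \<Rightarrow> complex) \<Rightarrow> int \<Rightarrow> complex" where
  "EM_R M c d phiL phiR x = c * extZ M phiL (x - 1) + d * extZ M phiR (x - 1)"

definition solves_resolvent ::
  "nat \<Rightarrow> complex \<Rightarrow> complex \<Rightarrow> complex \<Rightarrow> complex \<Rightarrow> complex \<Rightarrow> (int \<Rightarrow> complex) \<Rightarrow> (int \<Rightarrow> complex) \<Rightarrow> bool" where
  "solves_resolvent M a b c d z phiL phiR \<longleftrightarrow>
     (\<forall>x. 0 \<le> x \<and> x < int M \<longrightarrow>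
        z * phiL x - EM_L M a b phiL phiR x = 0 \<and>
        z * phiR x - EM_R M c d phiL phiR x = (if x = 0 then 1 else 0))"

end

theory Submission
  imports Defs
begin

(* Put omega = z / s with s^2 = Delta = det C. Unitarity gives d = Delta cnj a and c = - Delta cnj b,
   so the resolvent equations can be solved backwards from the right end x = M - 1, where phi_L
   vanishes. Up to a unimodular phase rho^k, the solution at site M - 1 - k is phi_R(M - 1) times
   (b |a| U_k / (a omega), U_(k+1) - |a| U_k / omega), the U_k = zeta'_k being Chebyshev values at
   the real point t = (omega + 1/omega) / (2|a|). The Cassini identity
   U_(k+1)^2 + U_k^2 - 2 t U_(k+1) U_k = 1 turns the squared norm into |a|^2 + |b|^2 (U_k^2 + U_(k+1)^2),
   the source term at x = 0 fixes |phi_R(M - 1)|, and on the boundary t = +-1, where U_m^2 = m^2. *)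

fun zeta'_real :: "nat \<Rightarrow> real \<Rightarrow> real" where
  "zeta'_real 0 r = 0"
| "zeta'_real (Suc 0) r = 1"
| "zeta'_real (Suc (Suc k)) r = 2 * r * zeta'_real (Suc k) r - zeta'_real k r"

lemma zeta'_Suc_Suc: "zeta' (Suc (Suc k)) t = 2 * t * zeta' (Suc k) t - zeta' k t"
  by (cases k) (auto simp: zeta'_def)

lemma zeta'_of_real: "zeta' k (of_real r) = of_real (zeta'_real k r)"
proof (induction k r rule: zeta'_real.induct)
  case (3 k r)
  then show ?case
    by (simp only: zeta'_Suc_Suc zeta'_real.simps of_real_diff of_real_mult of_real_numeral)
qed (simp_all add: zeta'_def)

lemma zeta'_real_Cassini:
  "zeta'_real (Suc k) r ^ 2 + zeta'_real k r ^ 2 - 2 * r * zeta'_real (Suc k) r * zeta'_real k r = 1"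
  by (induction k) (simp_all add: power2_eq_square algebra_simps)

lemma zeta'_real_one: "zeta'_real k 1 = real k"
  by (induction k "1::real" rule: zeta'_real.induct) auto

lemma zeta'_real_minus_one: "zeta'_real k (-1) = (-1) ^ Suc k * real k"
  by (induction k "-1::real" rule: zeta'_real.induct) (auto simp: algebra_simps)

lemma zeta'_real_square_unit:
  assumes "\<bar>r\<bar> = 1"
  shows "zeta'_real k r ^ 2 = real k ^ 2"
  using assms by (auto simp: abs_if zeta'_real_one zeta'_real_minus_one power_mult_distrib
      simp flip: power_mult split: if_splits)

lemma norm_squares_eq_1_iff:
  "cmod x ^ 2 + cmod y ^ 2 = 1 \<longleftrightarrow> x * cnj x + y * cnj y = 1"
  by (metis complex_norm_square of_real_add of_real_eq_1_iff)

lemma unitary2_d_eq: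
  assumes "unitary2 a b c d"
  shows "d = (a * d - b * c) * cnj a"
proof -
  from assms have col: "a * cnj a + c * cnj c = 1" and orth: "cnj a * b + cnj c * d = 0"
    by (auto simp: unitary2_def norm_squares_eq_1_iff)
  have "(a * d - b * c) * cnj a = d * (a * cnj a + c * cnj c)"
    using orth by algebra
  then show ?thesis using col by simp
qed

lemma unitary2_c_eq:
  assumes "unitary2 a b c d"
  shows "c = - (a * d - b * c) * cnj b"
proof -
  from assms have col: "b * cnj b + d * cnj d = 1" and orth: "cnj a * b + cnj c * d = 0"
    by (auto simp: unitary2_def norm_squares_eq_1_iff)
  have "a * cnj b + c * cnj d = 0"
    using arg_cong[OF orth, of cnj] by simp
  then have "(a * d - b * c) * cnj b = - c * (b * cnj b + d * cnj d)"
    by algebra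
  then show ?thesis using col by algebra
qed

lemma unitary2_det_nonzero:
  assumes "unitary2 a b c d"
  shows "a * d - b * c \<noteq> 0"
proof
  assume "a * d - b * c = 0"
  then have "c = 0" "d = 0"
    using unitary2_c_eq[OF assms] unitary2_d_eq[OF assms] by simp_all
  with assms have "cmod a = 1" "cmod b = 1" "cnj a * b = 0"
    by (auto simp: unitary2_def power2_eq_1_iff)
  then show False by auto
qed

lemma unitary2_row_norm:
  assumes "unitary2 a b c d"
  shows "cmod a ^ 2 + cmod b ^ 2 = 1"
proof -
  define D where "D = a * d - b * c"
  have "D = a * (D * cnj a) - b * (- D * cnj b)"
    unfolding D_def by (metis unitary2_c_eq[OF assms] unitary2_d_eq[OF assms])
  then have "D * (a * cnj a + b * cnj b) = D * 1"
    by (simp add: algebra_simps)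
  then show ?thesis
    using unitary2_det_nonzero[OF assms] by (simp add: D_def norm_squares_eq_1_iff)
qed

lemma unitary2_det_norm:
  assumes "unitary2 a b c d"
  shows "cmod (a * d - b * c) = 1"
proof -
  define D where "D = a * d - b * c"
  have ab: "a * cnj a + b * cnj b = 1"
    using unitary2_row_norm[OF assms] by (simp add: norm_squares_eq_1_iff)
  from assms have "a * cnj a + c * cnj c = 1" "b * cnj b + d * cnj d = 1"
    by (auto simp: unitary2_def norm_squares_eq_1_iff)
  then have cd: "c * cnj c + d * cnj d = 1"
    using ab by algebra
  have "c = - D * cnj b" "d = D * cnj a"
    unfolding D_def by (fact unitary2_c_eq[OF assms] unitary2_d_eq[OF assms])+
  then have "c * cnj c + d * cnj d = D * cnj D * (a * cnj a + b * cnj b)"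
    by (simp add: algebra_simps)
  then have "D * cnj D = 1"
    using ab cd by simp
  then have "cmod D ^ 2 = 1"
    by (metis complex_norm_square of_real_eq_1_iff)
  then show ?thesis
    unfolding D_def using norm_ge_zero[of "a * d - b * c"] by (auto simp: power2_eq_1_iff)
qed

lemma unitary2_det_sqrt_norm:
  assumes "unitary2 a b c d" "s ^ 2 = a * d - b * c"
  shows "cmod s = 1"
proof -
  have "cmod s ^ 2 = 1"
    using unitary2_det_norm[OF assms(1)] assms(2) by (metis norm_power)
  then show ?thesis
    using norm_ge_zero[of s] by (auto simp: power2_eq_1_iff)
qed

lemma solves_resolventD:
  assumes "solves_resolvent M a b c d z phiL phiR" "0 \<le> x" "x < int M"
  shows "z * phiL x = a * extZ M phiL (x + 1) + b * extZ M phiR (x + 1)"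
    and "z * phiR x = c * extZ M phiL (x - 1) + d * extZ M phiR (x - 1) + (if x = 0 then 1 else 0)"
  using assms by (auto simp: solves_resolvent_def EM_L_def EM_R_def algebra_simps)

locale walk_resolvent =
  fixes a b c d s \<omega> :: complex
  assumes unitary: "unitary2 a b c d"
    and a_nonzero: "a \<noteq> 0"
    and det_sqrt: "s ^ 2 = a * d - b * c"
    and omega_unit: "cmod \<omega> = 1"
begin

lemma s_unit: "cmod s = 1"
  using unitary2_det_sqrt_norm[OF unitary det_sqrt] .

lemma d_eq: "d = s ^ 2 * cnj a"
  using unitary2_d_eq[OF unitary] det_sqrt by simp

lemma c_eq: "c = - (s ^ 2) * cnj b"
  using unitary2_c_eq[OF unitary] det_sqrt by simp

lemma d_nonzero: "d \<noteq> 0"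
  using s_unit a_nonzero by (auto simp: d_eq)

lemma norm_b_square: "cmod b ^ 2 = 1 - cmod a ^ 2"
  using unitary2_row_norm[OF unitary] by simp

lemma omega_nonzero: "\<omega> \<noteq> 0"
  using omega_unit by auto

lemma inverse_omega: "inverse \<omega> = cnj \<omega>"
proof -
  have "\<omega> * cnj \<omega> = 1"
    using omega_unit complex_norm_square[of \<omega>] by simp
  then show ?thesis by (metis inverse_unique)
qed

definition t :: real where "t = Re \<omega> / cmod a"

lemma omega_plus_inverse: "\<omega> + inverse \<omega> = 2 * cmod a * t"
  using a_nonzero by (simp add: t_def inverse_omega complex_add_cnj)

lemma t_eq: "(\<omega> + inverse \<omega>) / (2 * complex_of_real (cmod a)) = complex_of_real t"
  using a_nonzero by (simp add: omega_plus_inverse)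

definition \<rho> :: complex where "\<rho> = a / (s * cmod a)"

lemma rho_unit: "cmod \<rho> = 1"
  using s_unit a_nonzero by (simp add: \<rho>_def norm_divide norm_mult)

definition psiL :: "nat \<Rightarrow> complex" where
  "psiL k = \<rho> ^ k * zeta'_real k t * b * cmod a / (a * \<omega>)"

definition psiR :: "nat \<Rightarrow> complex" where
  "psiR k = \<rho> ^ k * (zeta'_real (Suc k) t - cmod a / \<omega> * zeta'_real k t)"

lemma psiL_Suc: "s * \<omega> * psiL (Suc k) = a * psiL k + b * psiR k"
proof -
  have "s \<noteq> 0" "complex_of_real (cmod a) \<noteq> 0"
    using s_unit a_nonzero by auto
  then have "s * \<omega> * psiL (Suc k) = \<rho> ^ k * b * zeta'_real (Suc k) t"
    and "a * psiL k + b * psiR k = \<rho> ^ k * b * zeta'_real (Suc k) t"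
    using a_nonzero omega_nonzero by (simp_all add: psiL_def psiR_def \<rho>_def field_simps)
  then show ?thesis by simp
qed

lemma d_rho: "d * \<rho> = s * cmod a"
proof -
  have "d * \<rho> = s * (a * cnj a) / cmod a"
    using s_unit a_nonzero by (auto simp: d_eq \<rho>_def field_simps power2_eq_square)
  also have "\<dots> = s * cmod a"
    using a_nonzero by (simp add: complex_norm_square[symmetric] power2_eq_square)
  finally show ?thesis .
qed

lemma c_psiL_Suc: "c * psiL (Suc k) = - (\<rho> ^ k * s * cmod b ^ 2 / \<omega> * zeta'_real (Suc k) t)"
proof -
  have "c * psiL (Suc k) = - (\<rho> ^ k * s * (b * cnj b) / \<omega> * zeta'_real (Suc k) t)"
    using s_unit a_nonzero by (auto simp: c_eq psiL_def \<rho>_def field_simps power2_eq_square)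
  then show ?thesis by (simp add: complex_norm_square[symmetric])
qed

lemma psiR_Suc: "d * psiR (Suc k) = s * \<omega> * psiR k - c * psiL (Suc k)"
proof -
  define A B C where "A = complex_of_real (zeta'_real (Suc (Suc k)) t)"
    and "B = complex_of_real (zeta'_real (Suc k) t)" and "C = complex_of_real (zeta'_real k t)"
  define \<alpha> where "\<alpha> = complex_of_real (cmod a)"
  have rec: "\<alpha> * A = (\<omega> + inverse \<omega>) * B - \<alpha> * C"
    by (simp add: A_def B_def C_def \<alpha>_def omega_plus_inverse algebra_simps)
  have norm_b: "complex_of_real (cmod b) ^ 2 = 1 - \<alpha> ^ 2"
    using arg_cong[OF norm_b_square, of complex_of_real] by (simp add: \<alpha>_def)
  have "d * psiR (Suc k) = (d * \<rho>) * \<rho> ^ k * (A - \<alpha> / \<omega> * B)"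
    unfolding psiR_def A_def B_def \<alpha>_def by (simp add: mult_ac)
  also have "\<dots> = \<rho> ^ k * s * (\<alpha> * A - \<alpha> ^ 2 / \<omega> * B)"
    unfolding d_rho \<alpha>_def[symmetric] by (simp add: power2_eq_square algebra_simps)
  also have "\<dots> = \<rho> ^ k * s * ((\<omega> + inverse \<omega>) * B - \<alpha> * C - \<alpha> ^ 2 / \<omega> * B)"
    by (simp only: rec)
  also have "\<dots> = \<rho> ^ k * s * (\<omega> * B - \<alpha> * C + (1 - \<alpha> ^ 2) / \<omega> * B)"
    using omega_nonzero by (simp add: field_simps)
  also have "\<dots> = s * \<omega> * psiR k - c * psiL (Suc k)"
    using omega_nonzero
    by (simp add: psiR_def c_psiL_Suc B_def C_def \<alpha>_def[symmetric] norm_b field_simps)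
  finally show ?thesis .
qed

lemma norm_psiL: "cmod (psiL k) ^ 2 = cmod b ^ 2 * zeta'_real k t ^ 2"
  using rho_unit omega_unit a_nonzero
  by (simp add: psiL_def norm_divide norm_mult norm_power power_mult_distrib)

lemma norm_psiR: "cmod (psiR k) ^ 2 = cmod a ^ 2 + cmod b ^ 2 * zeta'_real (Suc k) t ^ 2"
proof -
  define X Y where "X = zeta'_real (Suc k) t" and "Y = zeta'_real k t"
  have "cmod (psiR k) = cmod (X - cmod a * cnj \<omega> * Y)"
    using rho_unit by (simp add: psiR_def X_def Y_def norm_mult norm_power divide_inverse inverse_omega)
  then have "cmod (psiR k) ^ 2 = (X - cmod a * Re \<omega> * Y) ^ 2 + (cmod a * Im \<omega> * Y) ^ 2"
    by (simp add: cmod_power2)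
  also have "\<dots> = X ^ 2 - 2 * t * cmod a ^ 2 * X * Y + cmod a ^ 2 * Y ^ 2 * (Re \<omega> ^ 2 + Im \<omega> ^ 2)"
    using a_nonzero by (simp add: t_def power2_eq_square algebra_simps)
  also have "\<dots> = X ^ 2 + cmod a ^ 2 * (X ^ 2 + Y ^ 2 - 2 * t * X * Y) - cmod a ^ 2 * X ^ 2"
    using omega_unit cmod_power2[of \<omega>] by (simp add: algebra_simps)
  also have "\<dots> = cmod a ^ 2 + cmod b ^ 2 * X ^ 2"
    using zeta'_real_Cassini[of k t] by (simp add: X_def Y_def norm_b_square algebra_simps)
  finally show ?thesis by (simp add: X_def)
qed

lemma solves_resolvent_backward:
  assumes sol: "solves_resolvent M a b c d (s * \<omega>) phiL phiR" and "j < M"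
  shows "phiL (int M - 1 - int j) = phiR (int M - 1) * psiL j
       \<and> phiR (int M - 1 - int j) = phiR (int M - 1) * psiR j"
  using \<open>j < M\<close>
proof (induction j)
  case 0
  have "s * \<omega> * phiL (int M - 1) = 0"
    using solves_resolventD(1)[OF sol, of "int M - 1"] 0 by (simp add: extZ_def)
  then show ?case
    using s_unit omega_nonzero by (auto simp: psiL_def psiR_def)
next
  case (Suc j)
  define \<beta> where "\<beta> = phiR (int M - 1)"
  define x where "x = int M - 2 - int j"
  have x: "0 \<le> x" "x + 1 < int M" "x + 1 \<noteq> 0"
    using Suc.prems by (auto simp: x_def)
  have IH: "phiL (x + 1) = \<beta> * psiL j" "phiR (x + 1) = \<beta> * psiR j"
    using Suc by (simp_all add: x_def \<beta>_def algebra_simps)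
  have "s * \<omega> * phiL x = a * phiL (x + 1) + b * phiR (x + 1)"
    using solves_resolventD(1)[OF sol, of x] x by (simp add: extZ_def)
  also have "\<dots> = \<beta> * (s * \<omega> * psiL (Suc j))"
    unfolding IH psiL_Suc by (simp add: algebra_simps)
  finally have L: "phiL x = \<beta> * psiL (Suc j)"
    using s_unit omega_nonzero by auto
  have "s * \<omega> * phiR (x + 1) = c * phiL x + d * phiR x"
    using solves_resolventD(2)[OF sol, of "x + 1"] x by (simp add: extZ_def)
  then have "d * phiR x = s * \<omega> * phiR (x + 1) - c * phiL x"
    by simp
  also have "\<dots> = \<beta> * (s * \<omega> * psiR j - c * psiL (Suc j))"
    unfolding IH L by (simp add: algebra_simps)
  also have "\<dots> = \<beta> * (d * psiR (Suc j))"
    by (simp add: psiR_Suc)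
  finally have R: "phiR x = \<beta> * psiR (Suc j)"
    using d_nonzero by simp
  show ?case
    using L R by (simp add: x_def \<beta>_def algebra_simps)
qed

lemma solves_resolvent_normalization:
  assumes sol: "solves_resolvent M a b c d (s * \<omega>) phiL phiR" and "M \<ge> 1"
  shows "cmod (phiR (int M - 1)) ^ 2 * (cmod a ^ 2 + cmod b ^ 2 * zeta'_real M t ^ 2) = 1"
proof -
  have "s * \<omega> * phiR 0 = 1"
    using solves_resolventD(2)[OF sol, of 0] \<open>M \<ge> 1\<close> by (simp add: extZ_def)
  then have "cmod (phiR 0) = 1"
    using s_unit omega_unit by (metis mult_1 norm_mult norm_one)
  moreover have "phiR 0 = phiR (int M - 1) * psiR (M - 1)"
    using solves_resolvent_backward[OF sol, of "M - 1"] \<open>M \<ge> 1\<close> by (simp add: of_nat_diff)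
  ultimately have "cmod (phiR (int M - 1)) * cmod (psiR (M - 1)) = 1"
    by (simp add: norm_mult)
  then have "cmod (phiR (int M - 1)) ^ 2 * cmod (psiR (M - 1)) ^ 2 = 1"
    by (metis power_mult_distrib power_one)
  then show ?thesis
    using \<open>M \<ge> 1\<close> by (simp add: norm_psiR)
qed

lemma solves_resolvent_norm:
  assumes sol: "solves_resolvent M a b c d (s * \<omega>) phiL phiR" and "n < M"
  shows "cmod (phiR (int n)) ^ 2 + cmod (phiL (int n)) ^ 2
    = (cmod a ^ 2 + cmod b ^ 2 * zeta'_real (M - n - 1) t ^ 2 + cmod b ^ 2 * zeta'_real (M - n) t ^ 2)
      / (cmod a ^ 2 + cmod b ^ 2 * zeta'_real M t ^ 2)"
proof -
  define k where "k = M - n - 1"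
  have k: "int n = int M - 1 - int k" "M - n = Suc k" "k < M"
    using \<open>n < M\<close> by (auto simp: k_def)
  define Den where "Den = cmod a ^ 2 + cmod b ^ 2 * zeta'_real M t ^ 2"
  have "Den > 0"
    using a_nonzero by (simp add: Den_def add_pos_nonneg)
  then have \<beta>: "cmod (phiR (int M - 1)) ^ 2 = 1 / Den"
    using solves_resolvent_normalization[OF sol] \<open>n < M\<close> by (simp add: Den_def eq_divide_eq)
  have "cmod (phiR (int n)) ^ 2 + cmod (phiL (int n)) ^ 2
      = cmod (phiR (int M - 1)) ^ 2 * (cmod (psiR k) ^ 2 + cmod (psiL k) ^ 2)"
    using solves_resolvent_backward[OF sol k(3)]
    by (simp add: k(1) norm_mult power_mult_distrib algebra_simps)
  then show ?thesis
    unfolding Den_def[symmetric] by (simp add: \<beta> k(2) k_def[symmetric] norm_psiL norm_psiR add_ac)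
qed

end

theorem mainTheorem6:
  fixes M :: nat and a b c d s :: complex and xi :: real and phiL phiR :: "int \<Rightarrow> complex"
  assumes "M \<ge> 1"
    and "unitary2 a b c d"
    and "a * b * c * d \<noteq> 0"
    and "s ^ 2 = a * d - b * c"
    and "solves_resolvent M a b c d (cis (- xi)) phiL phiR"
    and "n < M"
  shows "let z = cis (- xi); \<omega> = z / s; t = (\<omega> + inverse \<omega>) / (2 * complex_of_real (cmod a));
             nrm = complex_of_real (cmod (phiR (int n)) ^ 2 + cmod (phiL (int n)) ^ 2)
         in (cmod t \<noteq> 1 \<longrightarrow>
               nrm = (complex_of_real (cmod a ^ 2) + complex_of_real (cmod b ^ 2) * zeta' (M - n - 1) t ^ 2
                       + complex_of_real (cmod b ^ 2) * zeta' (M - n) t ^ 2)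
                     / (complex_of_real (cmod a ^ 2) + complex_of_real (cmod b ^ 2) * zeta' M t ^ 2))
          \<and> (cmod t = 1 \<longrightarrow>
               nrm = complex_of_real ((cmod a ^ 2 + cmod b ^ 2 * real (M - n) ^ 2 + cmod b ^ 2 * real (M - n - 1) ^ 2)
                     / (cmod a ^ 2 + real M ^ 2 * cmod b ^ 2)))"
proof -
  define \<omega> where "\<omega> = cis (- xi) / s"
  have "cmod s = 1"
    using unitary2_det_sqrt_norm[OF assms(2,4)] .
  interpret walk_resolvent a b c d s \<omega>
  proof
    show "unitary2 a b c d" "s ^ 2 = a * d - b * c" "a \<noteq> 0"
      using assms(2-4) by simp_all
    show "cmod \<omega> = 1"
      using \<open>cmod s = 1\<close> by (simp add: \<omega>_def norm_divide)
  qed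
  have sol: "solves_resolvent M a b c d (s * \<omega>) phiL phiR"
    using assms(5) \<open>cmod s = 1\<close> by (auto simp: \<omega>_def)
  note norm = solves_resolvent_norm[OF sol assms(6)]
  define nrm where "nrm = cmod (phiR (int n)) ^ 2 + cmod (phiL (int n)) ^ 2"
  have "complex_of_real nrm
      = (complex_of_real (cmod a ^ 2) + complex_of_real (cmod b ^ 2) * zeta' (M - n - 1) t ^ 2
         + complex_of_real (cmod b ^ 2) * zeta' (M - n) t ^ 2)
        / (complex_of_real (cmod a ^ 2) + complex_of_real (cmod b ^ 2) * zeta' M t ^ 2)"
    by (simp add: nrm_def norm zeta'_of_real)
  moreover have "nrm = (cmod a ^ 2 + cmod b ^ 2 * real (M - n) ^ 2 + cmod b ^ 2 * real (M - n - 1) ^ 2)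
      / (cmod a ^ 2 + real M ^ 2 * cmod b ^ 2)" if "\<bar>t\<bar> = 1"
    unfolding nrm_def norm using that by (simp add: zeta'_real_square_unit add_ac mult.commute)
  ultimately show ?thesis
    unfolding Let_def \<omega>_def[symmetric] t_eq nrm_def[symmetric] by simp
qed

end
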